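(* Let $S$ be an entropy function for a finite set $X$. Given functions $\mu,\nu:2^X\to[0,\infty)$, there exist functions $\mu',\nu':2^X\to[0,\infty)$ with non-overlapping supports (i.e. $\mu'(A)>0$ and $\nu'(B)>0$ imply $A\cap B=\emptyset$) such that $\phi_{\mu'}-\phi_{\nu'}=\phi_\mu-\phi_\nu$ and \[\sum_{A\subseteq X}(\mu'(A)+\nu'(A))S(A)\le\sum_{A\subseteq X}(\mu(A)+\nu(A))S(A).\]
   Context: An entropy function for a finite set $X$ is a function $S:2^X\to[0,\infty)$ with $S(\emptyset)=0$, $S(A)+S(B)\ge S(A\cap B)+S(A\cup B)$ and $S(A)+S(B)\ge S(A\setminus B)+S(B\setminus A)$ for all $A,B\subseteq X$. For $\mu:2^X\to\mathbb R$, $\phi_\mu:X\to\mathbb R$ is defined by $\phi_\mu(x):=\sum_{A\ni x}\mu(A)$. *)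

theory Defs
  imports Complex_Main
begin

definition entropy_function :: "'a set \<Rightarrow> ('a set \<Rightarrow> real) \<Rightarrow> bool" where
  "entropy_function X S \<longleftrightarrow>
     (\<forall>A\<subseteq>X. S A \<ge> 0) \<and> S {} = 0 \<and>
     (\<forall>A\<subseteq>X. \<forall>B\<subseteq>X. S A + S B \<ge> S (A \<inter> B) + S (A \<union> B)) \<and>
     (\<forall>A\<subseteq>X. \<forall>B\<subseteq>X. S A + S B \<ge> S (A - B) + S (B - A))"

definition phi :: "'a set \<Rightarrow> ('a set \<Rightarrow> real) \<Rightarrow> 'a \<Rightarrow> real" where
  "phi X \<mu> x = (\<Sum>A\<in>{A. A \<subseteq> X \<and> x \<in> A}. \<mu> A)"

end

theory Submission
  imports Defs
begin

text \<open>If a point x lies in a set A of positive \<mu>-weight and in a set B of positive \<nu>-weight,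
  move the weight t = min (\<mu> A) (\<nu> B) from A to A - B in \<mu> and from B to B - A in \<nu>.
  Both \<open>\<phi>\<^sub>\<mu>\<close> and \<open>\<phi>\<^sub>\<nu>\<close> drop by t exactly on A \<inter> B, so their difference is unchanged, and
  the weighted entropy does not increase because S A + S B \<ge> S (A - B) + S (B - A).
  The new sets avoid x and A or B loses all its weight, so the number of supporting sets
  through x decreases; iterating separates the supports at x. Since the union of each support
  never grows, points already separated stay separated, and treating every point of X in turn
  gives disjoint supports.\<close>

definition weighted_entropy :: "'a set \<Rightarrow> ('a set \<Rightarrow> real) \<Rightarrow> ('a set \<Rightarrow> real) \<Rightarrow> real" where
  "weighted_entropy X S \<mu> = (\<Sum>A\<in>Pow X. \<mu> A * S A)"

definition support_union :: "'a set \<Rightarrow> ('a set \<Rightarrow> real) \<Rightarrow> 'a set" where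
  "support_union X \<mu> = \<Union>{C. C \<subseteq> X \<and> 0 < \<mu> C}"

definition supports_at :: "'a set \<Rightarrow> ('a set \<Rightarrow> real) \<Rightarrow> 'a \<Rightarrow> 'a set set" where
  "supports_at X \<mu> x = {C \<in> Pow X. x \<in> C \<and> 0 < \<mu> C}"

definition move_mass :: "'b \<Rightarrow> 'b \<Rightarrow> real \<Rightarrow> ('b \<Rightarrow> real) \<Rightarrow> 'b \<Rightarrow> real" where
  "move_mass A D c \<mu> = \<mu>(A := \<mu> A - c, D := \<mu> D + c)"

definition improves :: "'a set \<Rightarrow> ('a set \<Rightarrow> real) \<Rightarrow> ('a set \<Rightarrow> real) \<Rightarrow> ('a set \<Rightarrow> real)
    \<Rightarrow> ('a set \<Rightarrow> real) \<Rightarrow> ('a set \<Rightarrow> real) \<Rightarrow> bool" where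
  "improves X S \<mu> \<nu> \<mu>' \<nu>' \<longleftrightarrow>
     (\<forall>A\<subseteq>X. 0 \<le> \<mu>' A) \<and> (\<forall>A\<subseteq>X. 0 \<le> \<nu>' A) \<and>
     (\<forall>y. phi X \<mu>' y - phi X \<nu>' y = phi X \<mu> y - phi X \<nu> y) \<and>
     weighted_entropy X S \<mu>' + weighted_entropy X S \<nu>' \<le> weighted_entropy X S \<mu> + weighted_entropy X S \<nu>"

lemma improves_refl:
  assumes "\<forall>A\<subseteq>X. 0 \<le> \<mu> A" and "\<forall>A\<subseteq>X. 0 \<le> \<nu> A"
  shows "improves X S \<mu> \<nu> \<mu> \<nu>"
  using assms by (simp add: improves_def)

lemma improves_trans:
  assumes "improves X S \<mu> \<nu> \<mu>' \<nu>'" and "improves X S \<mu>' \<nu>' \<mu>'' \<nu>''"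
  shows "improves X S \<mu> \<nu> \<mu>'' \<nu>''"
  using assms unfolding improves_def by auto

lemma sum_move_mass:
  fixes \<mu> w :: "'b \<Rightarrow> real"
  assumes "finite F" and "A \<in> F" and "D \<in> F" and "A \<noteq> D"
  shows "(\<Sum>C\<in>F. move_mass A D c \<mu> C * w C) = (\<Sum>C\<in>F. \<mu> C * w C) - c * w A + c * w D"
proof -
  have "(\<Sum>C\<in>F. move_mass A D c \<mu> C * w C)
      = (\<Sum>C\<in>F. \<mu> C * w C - (if C = A then c * w A else 0) + (if C = D then c * w D else 0))"
    using \<open>A \<noteq> D\<close> by (intro sum.cong) (auto simp: move_mass_def algebra_simps)
  also have "\<dots> = (\<Sum>C\<in>F. \<mu> C * w C) - c * w A + c * w D"
    using assms by (simp add: sum.distrib sum_subtractf)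
  finally show ?thesis .
qed

lemma phi_eq_sum_indicator:
  assumes "finite X"
  shows "phi X \<mu> y = (\<Sum>C\<in>Pow X. \<mu> C * of_bool (y \<in> C))"
proof -
  have "{C. C \<subseteq> X \<and> y \<in> C} = {C \<in> Pow X. y \<in> C}" by blast
  then have "phi X \<mu> y = (\<Sum>C\<in>Pow X. if y \<in> C then \<mu> C else 0)"
    unfolding phi_def using assms by (simp only: sum.inter_filter finite_Pow_iff)
  also have "\<dots> = (\<Sum>C\<in>Pow X. \<mu> C * of_bool (y \<in> C))"
    by (rule sum.cong) auto
  finally show ?thesis .
qed

lemma phi_move_mass:
  assumes "finite X" and "A \<subseteq> X" and "D \<subseteq> X" and "A \<noteq> D"
  shows "phi X (move_mass A D c \<mu>) y = phi X \<mu> y - c * of_bool (y \<in> A) + c * of_bool (y \<in> D)"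
  using assms unfolding phi_eq_sum_indicator[OF \<open>finite X\<close>]
  by (intro sum_move_mass) auto

lemma weighted_entropy_move_mass:
  assumes "finite X" and "A \<subseteq> X" and "D \<subseteq> X" and "A \<noteq> D"
  shows "weighted_entropy X S (move_mass A D c \<mu>) = weighted_entropy X S \<mu> - c * S A + c * S D"
  using assms by (simp add: weighted_entropy_def sum_move_mass)

lemma subset_support_union: "C \<subseteq> X \<Longrightarrow> 0 < \<mu> C \<Longrightarrow> C \<subseteq> support_union X \<mu>"
  by (auto simp: support_union_def)

lemma support_union_move_mass:
  assumes "D \<subseteq> A" and "A \<subseteq> X" and "0 < \<mu> A"
  shows "support_union X (move_mass A D c \<mu>) \<subseteq> support_union X \<mu>"
proof
  fix y assume "y \<in> support_union X (move_mass A D c \<mu>)"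
  then obtain C where C: "C \<subseteq> X" "y \<in> C" "0 < move_mass A D c \<mu> C"
    by (auto simp: support_union_def)
  show "y \<in> support_union X \<mu>"
  proof (cases "C = A \<or> C = D")
    case True
    then have "y \<in> A" using C(2) \<open>D \<subseteq> A\<close> by blast
    then show ?thesis using subset_support_union[of A X \<mu>] assms by blast
  next
    case False
    then show ?thesis using C by (auto simp: support_union_def move_mass_def)
  qed
qed

lemma supports_at_move_mass_subset:
  assumes "x \<notin> D" and "0 \<le> c"
  shows "supports_at X (move_mass A D c \<mu>) x \<subseteq> supports_at X \<mu> x"
  using assms by (auto simp: supports_at_def move_mass_def)

lemma finite_supports_at: "finite X \<Longrightarrow> finite (supports_at X \<mu> x)"
  by (simp add: supports_at_def)

lemma card_supports_at_move_mass_le: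
  assumes "finite X" and "x \<notin> D" and "0 \<le> c"
  shows "card (supports_at X (move_mass A D c \<mu>) x) \<le> card (supports_at X \<mu> x)"
  using assms by (intro card_mono finite_supports_at supports_at_move_mass_subset)

lemma card_supports_at_move_all_mass_less:
  assumes "x \<notin> D" and "A \<subseteq> X" and "x \<in> A" and "0 < \<mu> A" and "finite X"
  shows "card (supports_at X (move_mass A D (\<mu> A) \<mu>) x) < card (supports_at X \<mu> x)"
proof (rule psubset_card_mono)
  show "finite (supports_at X \<mu> x)"
    using \<open>finite X\<close> by (rule finite_supports_at)
  have "A \<notin> supports_at X (move_mass A D (\<mu> A) \<mu>) x" "A \<in> supports_at X \<mu> x"
    using assms by (auto simp: supports_at_def move_mass_def)
  with supports_at_move_mass_subset[of x D "\<mu> A" X A \<mu>] assms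
  show "supports_at X (move_mass A D (\<mu> A) \<mu>) x \<subset> supports_at X \<mu> x"
    by auto
qed

lemma improves_uncross:
  assumes "finite X" and "entropy_function X S"
    and "\<forall>C\<subseteq>X. 0 \<le> \<mu> C" and "\<forall>C\<subseteq>X. 0 \<le> \<nu> C"
    and A: "A \<subseteq> X" and B: "B \<subseteq> X" and "A \<inter> B \<noteq> {}"
    and "0 \<le> t" and "t \<le> \<mu> A" and "t \<le> \<nu> B"
  shows "improves X S \<mu> \<nu> (move_mass A (A - B) t \<mu>) (move_mass B (B - A) t \<nu>)"
proof -
  have moved: "A \<noteq> A - B" "B \<noteq> B - A"
    using \<open>A \<inter> B \<noteq> {}\<close> by auto
  have targets: "A - B \<subseteq> X" "B - A \<subseteq> X"
    using A B by auto
  have "\<forall>C\<subseteq>X. 0 \<le> move_mass A (A - B) t \<mu> C" "\<forall>C\<subseteq>X. 0 \<le> move_mass B (B - A) t \<nu> C"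
    using assms moved by (auto simp: move_mass_def)
  moreover have "phi X (move_mass A (A - B) t \<mu>) y - phi X (move_mass B (B - A) t \<nu>) y
      = phi X \<mu> y - phi X \<nu> y" for y
    by (simp add: phi_move_mass[OF \<open>finite X\<close> A targets(1) moved(1)]
        phi_move_mass[OF \<open>finite X\<close> B targets(2) moved(2)])
  moreover have "S (A - B) + S (B - A) \<le> S A + S B"
    using \<open>entropy_function X S\<close> A B unfolding entropy_function_def by blast
  then have "t * (S (A - B) + S (B - A)) \<le> t * (S A + S B)"
    using \<open>0 \<le> t\<close> by (rule mult_left_mono)
  then have "weighted_entropy X S (move_mass A (A - B) t \<mu>) + weighted_entropy X S (move_mass B (B - A) t \<nu>)
      \<le> weighted_entropy X S \<mu> + weighted_entropy X S \<nu>"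
    by (simp add: weighted_entropy_move_mass[OF \<open>finite X\<close> A targets(1) moved(1)]
        weighted_entropy_move_mass[OF \<open>finite X\<close> B targets(2) moved(2)] algebra_simps)
  ultimately show ?thesis
    by (simp add: improves_def)
qed

lemma card_supports_at_uncross_less:
  assumes "finite X" and A: "A \<subseteq> X" "x \<in> A" "0 < \<mu> A" and B: "B \<subseteq> X" "x \<in> B" "0 < \<nu> B"
  defines "t \<equiv> min (\<mu> A) (\<nu> B)"
  shows "card (supports_at X (move_mass A (A - B) t \<mu>) x) + card (supports_at X (move_mass B (B - A) t \<nu>) x)
    < card (supports_at X \<mu> x) + card (supports_at X \<nu> x)"
proof (cases "\<mu> A \<le> \<nu> B")
  case True
  then have "t = \<mu> A"
    by (simp add: t_def)
  then have "card (supports_at X (move_mass A (A - B) t \<mu>) x) < card (supports_at X \<mu> x)"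
    using A B \<open>finite X\<close> by (simp add: card_supports_at_move_all_mass_less)
  moreover have "card (supports_at X (move_mass B (B - A) t \<nu>) x) \<le> card (supports_at X \<nu> x)"
    using A B \<open>finite X\<close> by (intro card_supports_at_move_mass_le) (auto simp: t_def)
  ultimately show ?thesis by linarith
next
  case False
  then have "t = \<nu> B"
    by (simp add: t_def)
  then have "card (supports_at X (move_mass B (B - A) t \<nu>) x) < card (supports_at X \<nu> x)"
    using A B \<open>finite X\<close> by (simp add: card_supports_at_move_all_mass_less)
  moreover have "card (supports_at X (move_mass A (A - B) t \<mu>) x) \<le> card (supports_at X \<mu> x)"
    using A B \<open>finite X\<close> by (intro card_supports_at_move_mass_le) (auto simp: t_def)
  ultimately show ?thesis by linarith
qed

lemma improves_separating_point:
  assumes "finite X" and "entropy_function X S"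
    and "\<forall>A\<subseteq>X. 0 \<le> \<mu> A" and "\<forall>A\<subseteq>X. 0 \<le> \<nu> A"
  shows "\<exists>\<mu>' \<nu>'. improves X S \<mu> \<nu> \<mu>' \<nu>' \<and>
    support_union X \<mu>' \<subseteq> support_union X \<mu> \<and> support_union X \<nu>' \<subseteq> support_union X \<nu> \<and>
    x \<notin> support_union X \<mu>' \<inter> support_union X \<nu>'"
  using assms(3,4)
proof (induction "card (supports_at X \<mu> x) + card (supports_at X \<nu> x)" arbitrary: \<mu> \<nu>
    rule: less_induct)
  case less
  show ?case
  proof (cases "x \<in> support_union X \<mu> \<inter> support_union X \<nu>")
    case False
    then show ?thesis
      using improves_refl[OF less.prems] by blast
  next
    case True
    then obtain A B where A: "A \<subseteq> X" "x \<in> A" "0 < \<mu> A" and B: "B \<subseteq> X" "x \<in> B" "0 < \<nu> B"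
      by (auto simp: support_union_def)
    define t where "t = min (\<mu> A) (\<nu> B)"
    define \<mu>1 where "\<mu>1 = move_mass A (A - B) t \<mu>"
    define \<nu>1 where "\<nu>1 = move_mass B (B - A) t \<nu>"
    have first: "improves X S \<mu> \<nu> \<mu>1 \<nu>1"
      unfolding \<mu>1_def \<nu>1_def t_def
      using A B by (intro improves_uncross assms(1,2) less.prems) auto
    have supp: "support_union X \<mu>1 \<subseteq> support_union X \<mu>" "support_union X \<nu>1 \<subseteq> support_union X \<nu>"
      unfolding \<mu>1_def \<nu>1_def using A B by (simp_all add: support_union_move_mass)
    have fewer: "card (supports_at X \<mu>1 x) + card (supports_at X \<nu>1 x)
        < card (supports_at X \<mu> x) + card (supports_at X \<nu> x)"
      unfolding \<mu>1_def \<nu>1_def t_def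
      by (rule card_supports_at_uncross_less[where \<mu> = \<mu> and \<nu> = \<nu>, OF assms(1) A B])
    have "\<forall>A\<subseteq>X. 0 \<le> \<mu>1 A" "\<forall>A\<subseteq>X. 0 \<le> \<nu>1 A"
      using first by (simp_all add: improves_def)
    then obtain \<mu>' \<nu>' where "improves X S \<mu>1 \<nu>1 \<mu>' \<nu>'"
      "support_union X \<mu>' \<subseteq> support_union X \<mu>1" "support_union X \<nu>' \<subseteq> support_union X \<nu>1"
      "x \<notin> support_union X \<mu>' \<inter> support_union X \<nu>'"
      using less.hyps[OF fewer] by blast
    then show ?thesis
      using improves_trans[OF first] supp by blast
  qed
qed

lemma improves_separating_set:
  assumes "finite X" and "entropy_function X S"
    and "\<forall>A\<subseteq>X. 0 \<le> \<mu> A" and "\<forall>A\<subseteq>X. 0 \<le> \<nu> A" and "finite Y"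
  shows "\<exists>\<mu>' \<nu>'. improves X S \<mu> \<nu> \<mu>' \<nu>' \<and> Y \<inter> support_union X \<mu>' \<inter> support_union X \<nu>' = {}"
  using \<open>finite Y\<close>
proof (induction Y rule: finite_induct)
  case empty
  show ?case
    using improves_refl[OF assms(3,4)] by blast
next
  case (insert y Y)
  then obtain \<mu>' \<nu>' where first: "improves X S \<mu> \<nu> \<mu>' \<nu>'"
    and separated: "Y \<inter> support_union X \<mu>' \<inter> support_union X \<nu>' = {}"
    by blast
  have "\<forall>A\<subseteq>X. 0 \<le> \<mu>' A" "\<forall>A\<subseteq>X. 0 \<le> \<nu>' A"
    using first by (simp_all add: improves_def)
  then obtain \<mu>'' \<nu>'' where second: "improves X S \<mu>' \<nu>' \<mu>'' \<nu>''"
    and "support_union X \<mu>'' \<subseteq> support_union X \<mu>'" "support_union X \<nu>'' \<subseteq> support_union X \<nu>'"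
    and "y \<notin> support_union X \<mu>'' \<inter> support_union X \<nu>''"
    using improves_separating_point[OF assms(1,2), of \<mu>' \<nu>' y] by blast
  with separated have "insert y Y \<inter> support_union X \<mu>'' \<inter> support_union X \<nu>'' = {}"
    by blast
  with improves_trans[OF first second] show ?case
    by blast
qed

theorem lemma30:
  fixes X :: "'a set" and S \<mu> \<nu> :: "'a set \<Rightarrow> real"
  assumes "finite X"
    and "entropy_function X S"
    and "\<forall>A\<subseteq>X. \<mu> A \<ge> 0"
    and "\<forall>A\<subseteq>X. \<nu> A \<ge> 0"
  shows "\<exists>\<mu>' \<nu>' :: 'a set \<Rightarrow> real.
           (\<forall>A\<subseteq>X. \<mu>' A \<ge> 0) \<and> (\<forall>A\<subseteq>X. \<nu>' A \<ge> 0) \<and>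
           (\<forall>A\<subseteq>X. \<forall>B\<subseteq>X. \<mu>' A > 0 \<and> \<nu>' B > 0 \<longrightarrow> A \<inter> B = {}) \<and>
           (\<forall>x\<in>X. phi X \<mu>' x - phi X \<nu>' x = phi X \<mu> x - phi X \<nu> x) \<and>
           (\<Sum>A\<in>Pow X. (\<mu>' A + \<nu>' A) * S A) \<le> (\<Sum>A\<in>Pow X. (\<mu> A + \<nu> A) * S A)"
proof -
  obtain \<mu>' \<nu>' where improved: "improves X S \<mu> \<nu> \<mu>' \<nu>'"
    and separated: "X \<inter> support_union X \<mu>' \<inter> support_union X \<nu>' = {}"
    using improves_separating_set[OF assms \<open>finite X\<close>] by blast
  have "A \<inter> B = {}" if "A \<subseteq> X" "B \<subseteq> X" "\<mu>' A > 0" "\<nu>' B > 0" for A B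
    using subset_support_union[of A X \<mu>'] subset_support_union[of B X \<nu>'] that separated
    by blast
  moreover have "(\<Sum>A\<in>Pow X. (f A + g A) * S A) = weighted_entropy X S f + weighted_entropy X S g"
    for f g :: "'a set \<Rightarrow> real"
    by (simp add: weighted_entropy_def distrib_right sum.distrib)
  ultimately show ?thesis
    using improved unfolding improves_def by (intro exI[of _ \<mu>'] exI[of _ \<nu>']) simp
qed

end
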